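(* Let $0<\alpha<1$ and $p,q>0$. If $\lambda_1(\widetilde{SG}_{\alpha,p}(A,B))\le\lambda_1(\mathcal{A}_{\alpha,q}(A,B))$ holds for all positive definite $2\times2$ matrices $A,B$, then $q/p\ge1-\alpha$. Hence, if $\widetilde{SG}_{\alpha,p}(A,B)\prec_w\mathcal{A}_{\alpha,q}(A,B)$ for all positive definite $2\times2$ matrices $A,B$, then $q/p\ge1-\alpha$.
   Context: For positive definite $A,B$: $A\#_\alpha B:=A^{1/2}(A^{-1/2}BA^{-1/2})^\alpha A^{1/2}$; $\widetilde F_\alpha(A,B):=(A^{-1}\#_\alpha B)^{1/2}A^{2(1-\alpha)}(A^{-1}\#_\alpha B)^{1/2}$; $\widetilde{SG}_{\alpha,p}(A,B):=\widetilde F_\alpha(A^p,B^p)^{1/p}$; $\mathcal{A}_{\alpha,q}(A,B):=((1-\alpha)A^q+\alpha B^q)^{1/q}$. For an $n\times n$ positive semidefinite $X$, $\lambda_1(X)\ge\dots\ge\lambda_n(X)$ are its eigenvalues in decreasing order with multiplicities; $X\prec_wY$ means $\sum_{i=1}^k\lambda_i(X)\le\sum_{i=1}^k\lambda_i(Y)$ for $1\le k\le n$. *)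

theory Defs
  imports Complex_Main "Jordan_Normal_Form.Jordan_Normal_Form" "Jordan_Normal_Form.Schur_Decomposition"
begin

definition hermitian_mat :: "complex mat \<Rightarrow> bool" where
  "hermitian_mat A \<longleftrightarrow> A \<in> carrier_mat (dim_row A) (dim_row A) \<and> mat_adjoint A = A"

definition pos_def_mat :: "complex mat \<Rightarrow> bool" where
  "pos_def_mat A \<longleftrightarrow> hermitian_mat A \<and>
     (\<forall>v \<in> carrier_vec (dim_row A). v \<noteq> 0\<^sub>v (dim_row A) \<longrightarrow> Re ((A *\<^sub>v v) \<bullet>c v) > 0)"

definition mat_rpow :: "complex mat \<Rightarrow> real \<Rightarrow> complex mat" where
  "mat_rpow A r = (let n = dim_row A;
     (U, d) = (SOME (U, d). U \<in> carrier_mat n n \<and> U * mat_adjoint U = 1\<^sub>m n \<and>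
        A = U * mat_diag n (\<lambda>i. complex_of_real (d i)) * mat_adjoint U)
     in U * mat_diag n (\<lambda>i. complex_of_real (d i powr r)) * mat_adjoint U)"

definition mat_gmean :: "real \<Rightarrow> complex mat \<Rightarrow> complex mat \<Rightarrow> complex mat" where
  "mat_gmean \<alpha> A B = mat_rpow A (1/2) *
     mat_rpow (mat_rpow A (-1/2) * B * mat_rpow A (-1/2)) \<alpha> * mat_rpow A (1/2)"

definition F_tilde :: "real \<Rightarrow> complex mat \<Rightarrow> complex mat \<Rightarrow> complex mat" where
  "F_tilde \<alpha> A B = (let G = mat_gmean \<alpha> (mat_rpow A (-1)) B in
     mat_rpow G (1/2) * mat_rpow A (2 * (1 - \<alpha>)) * mat_rpow G (1/2))"

definition SG_tilde :: "real \<Rightarrow> real \<Rightarrow> complex mat \<Rightarrow> complex mat \<Rightarrow> complex mat" where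
  "SG_tilde \<alpha> p A B = mat_rpow (F_tilde \<alpha> (mat_rpow A p) (mat_rpow B p)) (1/p)"

definition mat_pmean :: "real \<Rightarrow> real \<Rightarrow> complex mat \<Rightarrow> complex mat \<Rightarrow> complex mat" where
  "mat_pmean \<alpha> q A B =
     mat_rpow (complex_of_real (1 - \<alpha>) \<cdot>\<^sub>m mat_rpow A q + complex_of_real \<alpha> \<cdot>\<^sub>m mat_rpow B q) (1/q)"

text \<open>Eigenvalues with algebraic multiplicities (roots of the characteristic polynomial),
  real parts listed in decreasing order; eig k A is lambda_k(A) for 1 \<le> k \<le> n.\<close>
definition eig_mset :: "complex mat \<Rightarrow> complex multiset" where
  "eig_mset A = Abs_multiset (\<lambda>a. Polynomial.order a (char_poly A))"

definition eig :: "nat \<Rightarrow> complex mat \<Rightarrow> real" where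
  "eig k A = rev (sorted_list_of_multiset (image_mset Re (eig_mset A))) ! (k - 1)"

definition weak_maj :: "complex mat \<Rightarrow> complex mat \<Rightarrow> bool" where
  "weak_maj X Y \<longleftrightarrow> (\<forall>k \<in> {1..dim_row X}. (\<Sum>i=1..k. eig i X) \<le> (\<Sum>i=1..k. eig i Y))"

end

(*
  Take A = diag(1, e) and B = R diag(1, e) R^T with R the rotation by (c, s), e = d^(1/p), and let
  d -> 0. With M = A^(p/2) B^p A^(p/2) one has A^(-p) #_alpha B^p = G = A^(-p/2) M^alpha A^(-p/2), and
  F~(A^p, B^p) = G^(1/2) X G^(1/2), X = diag(1, d^(2(1-alpha))), has the eigenvalues of
  X^(1/2) G X^(1/2). Hence lambda_1(SG~(A, B))^p >= G_11 = (M^alpha)_11, which tends to c^(2 alpha)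
  because M tends to diag(c^2, 0). Meanwhile lambda_1(A_(alpha,q)(A, B))^q tends to
  1/2 + sqrt(1/4 - alpha (1 - alpha) s^2). If q/p < 1 - alpha, elementary bounds on ln, exp and sqrt
  give a rotation with (1 - s^2)^(alpha q/p) above this limit, so for small d the largest eigenvalue
  of SG~ exceeds that of the power mean; in particular weak majorisation fails for k = 1.
  Powers of real symmetric 2 x 2 matrices are explicit since these are rotated diagonal matrices.
*)
theory Submission
  imports Defs
begin

definition spectral_decomp :: "nat \<Rightarrow> complex mat \<Rightarrow> (nat \<Rightarrow> real) \<Rightarrow> complex mat \<Rightarrow> bool" where
  "spectral_decomp n U d A \<longleftrightarrow> U \<in> carrier_mat n n \<and> U * mat_adjoint U = 1\<^sub>m n \<and>
     A = U * mat_diag n (\<lambda>i. complex_of_real (d i)) * mat_adjoint U"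

lemma dim_mat_adjoint [simp]:
  "dim_row (mat_adjoint A) = dim_col A" "dim_col (mat_adjoint A) = dim_row A"
  unfolding mat_adjoint_def by (simp_all add: mat_of_rows_def)

lemma mat_adjoint_carrier [simp]: "A \<in> carrier_mat n m \<Longrightarrow> mat_adjoint A \<in> carrier_mat m n"
  by (rule carrier_matI) (auto dest: carrier_matD)

lemma index_mat_adjoint [simp]:
  "i < dim_col A \<Longrightarrow> j < dim_row A \<Longrightarrow> mat_adjoint (A :: complex mat) $$ (i, j) = cnj (A $$ (j, i))"
  unfolding mat_adjoint_def by (subst mat_of_rows_index) simp_all

lemma unitary_adjoint_mult:
  assumes "U \<in> carrier_mat n n" "U * mat_adjoint U = 1\<^sub>m n"
  shows "mat_adjoint U * U = 1\<^sub>m n"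
  using mat_mult_left_right_inverse[OF assms(1) mat_adjoint_carrier[OF assms(1)] assms(2)] .

lemma mat_diag_intertwine_map:
  assumes W: "W \<in> carrier_mat n n"
    and DW: "mat_diag n (\<lambda>i. complex_of_real (d i)) * W = W * mat_diag n (\<lambda>i. complex_of_real (e i))"
  shows "mat_diag n (\<lambda>i. complex_of_real (f (d i))) * W = W * mat_diag n (\<lambda>i. complex_of_real (f (e i)))"
proof (rule eq_matI)
  fix i j assume "i < dim_row (W * mat_diag n (\<lambda>i. complex_of_real (f (e i))))"
    "j < dim_col (W * mat_diag n (\<lambda>i. complex_of_real (f (e i))))"
  hence ij: "i < n" "j < n" using W by (auto simp: mat_diag_def)
  have "W $$ (i, j) = 0 \<or> d i = e j"
    using arg_cong[OF DW, of "\<lambda>M. M $$ (i, j)"] mat_diag_mult_left[OF W] mat_diag_mult_right[OF W] ij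
    by (auto simp: mult.commute)
  thus "(mat_diag n (\<lambda>i. complex_of_real (f (d i))) * W) $$ (i, j)
      = (W * mat_diag n (\<lambda>i. complex_of_real (f (e i)))) $$ (i, j)"
    using mat_diag_mult_left[OF W] mat_diag_mult_right[OF W] ij by auto
qed (use W in \<open>auto simp: mat_diag_def\<close>)

text \<open>If \<open>U diag d U\<^sup>* = V diag e V\<^sup>*\<close> then \<open>W = U\<^sup>* V\<close> intertwines \<open>diag d\<close> and \<open>diag e\<close>,
  hence also \<open>diag (f \<circ> d)\<close> and \<open>diag (f \<circ> e)\<close>: the matrix function does not depend on
  the chosen decomposition.\<close>
lemma spectral_decomp_map_eq:
  assumes "spectral_decomp n U d A" "spectral_decomp n V e A"
  shows "U * mat_diag n (\<lambda>i. complex_of_real (f (d i))) * mat_adjoint U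
       = V * mat_diag n (\<lambda>i. complex_of_real (f (e i))) * mat_adjoint V"
proof -
  define D where "D = mat_diag n (\<lambda>i. complex_of_real (d i))"
  define E where "E = mat_diag n (\<lambda>i. complex_of_real (e i))"
  define Df where "Df = mat_diag n (\<lambda>i. complex_of_real (f (d i)))"
  define Ef where "Ef = mat_diag n (\<lambda>i. complex_of_real (f (e i)))"
  define Ua where "Ua = mat_adjoint U"
  define Va where "Va = mat_adjoint V"
  define W where "W = Ua * V"
  have U: "U \<in> carrier_mat n n" "U * Ua = 1\<^sub>m n" "Ua * U = 1\<^sub>m n"
    and V: "V \<in> carrier_mat n n" "V * Va = 1\<^sub>m n" "Va * V = 1\<^sub>m n"
    and eq: "U * D * Ua = V * E * Va"
    using assms unitary_adjoint_mult by (auto simp: spectral_decomp_def D_def E_def Ua_def Va_def)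
  have carr: "D \<in> carrier_mat n n" "E \<in> carrier_mat n n" "Df \<in> carrier_mat n n" "Ef \<in> carrier_mat n n"
    "Ua \<in> carrier_mat n n" "Va \<in> carrier_mat n n" "W \<in> carrier_mat n n"
    using U V by (auto simp: D_def E_def Df_def Ef_def W_def Ua_def Va_def)
  have "D * W = (Ua * U) * D * (Ua * V)"
    using carr(1) U(3) by (simp add: W_def)
  also have "\<dots> = Ua * (U * D * Ua) * V"
    using U(1) V(1) carr by (simp add: assoc_mult_mat[of _ n n _ n _ n])
  also have "\<dots> = (Ua * V) * E * (Va * V)"
    unfolding eq using U(1) V(1) carr by (simp add: assoc_mult_mat[of _ n n _ n _ n])
  also have "\<dots> = W * E" using V carr by (simp add: W_def)
  finally have DfW: "Df * W = W * Ef"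
    unfolding D_def E_def Df_def Ef_def by (rule mat_diag_intertwine_map[OF carr(7)])
  have "U * Df * Ua = U * Df * Ua * (V * Va)"
    using U(1) V(2) carr by simp
  also have "\<dots> = U * (Df * W) * Va"
    using U(1) V(1) carr by (simp add: W_def assoc_mult_mat[of _ n n _ n _ n])
  also have "\<dots> = (U * Ua) * V * Ef * Va"
    unfolding DfW using U(1) V(1) carr by (simp add: W_def assoc_mult_mat[of _ n n _ n _ n])
  also have "\<dots> = V * Ef * Va" using U V by simp
  finally show ?thesis by (simp add: Df_def Ef_def Ua_def Va_def)
qed

lemma mat_rpow_spectral_decomp:
  assumes "spectral_decomp n U d A"
  shows "mat_rpow A r = U * mat_diag n (\<lambda>i. complex_of_real (d i powr r)) * mat_adjoint U"
proof -
  have n: "dim_row A = n" using assms by (auto simp: spectral_decomp_def)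
  define P where "P = (\<lambda>(U, d). spectral_decomp n U d A)"
  obtain V e where Ve: "(SOME x. P x) = (V, e)" by (cases "SOME x. P x") auto
  have "P (V, e)" using someI[of P "(U, d)"] assms Ve by (simp add: P_def)
  hence V: "spectral_decomp n V e A" by (simp add: P_def)
  have "mat_rpow A r = V * mat_diag n (\<lambda>i. complex_of_real (e i powr r)) * mat_adjoint V"
    using Ve unfolding mat_rpow_def Let_def n P_def spectral_decomp_def by simp
  also have "\<dots> = U * mat_diag n (\<lambda>i. complex_of_real (d i powr r)) * mat_adjoint U"
    using spectral_decomp_map_eq[OF V assms, of "\<lambda>x. x powr r"] by simp
  finally show ?thesis .
qed

lemma eig_1_spectral_decomp:
  assumes "spectral_decomp 2 U d A"
  shows "eig 1 A = max (d 0) (d 1)"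
proof -
  let ?D = "mat_diag 2 (\<lambda>i. complex_of_real (d i))"
  have U: "U \<in> carrier_mat 2 2" "U * mat_adjoint U = 1\<^sub>m 2" and A: "A = U * ?D * mat_adjoint U"
    using assms by (auto simp: spectral_decomp_def)
  have "similar_mat A ?D"
    unfolding A by (rule similar_matI[where P = U and Q = "mat_adjoint U"])
      (use U unitary_adjoint_mult[OF U] in auto)
  moreover have "char_poly ?D = (\<Prod>a\<leftarrow>diag_mat ?D. [:- a, 1:])"
    by (rule char_poly_upper_triangular[OF mat_diag_dim]) (auto simp: upper_triangular_def mat_diag_def)
  moreover have "diag_mat ?D = [complex_of_real (d 0), complex_of_real (d 1)]"
    by (simp add: diag_mat_def mat_diag_def upt_conv_Cons numeral_2_eq_2)
  ultimately have cp: "char_poly A = [:- complex_of_real (d 0), 1:] * [:- complex_of_real (d 1), 1:]"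
    using char_poly_similar by fastforce
  have order_linear: "Polynomial.order x [:- y, 1:] = (if x = y then 1 else 0)" for x y :: complex
    using order_power_n_n[of x 1] by (auto intro: order_0I)
  have "(\<lambda>x. Polynomial.order x (char_poly A)) = count {# complex_of_real (d 0), complex_of_real (d 1) #}"
    unfolding cp by (rule ext) (subst order_mult, simp, simp add: order_linear)
  hence "image_mset Re (eig_mset A) = {# d 0, d 1 #}"
    by (simp add: eig_mset_def count_inverse)
  thus ?thesis unfolding eig_def by (cases "d 0 \<le> d 1") (auto simp: max_def)
qed

definition rmat2 :: "real \<Rightarrow> real \<Rightarrow> real \<Rightarrow> real \<Rightarrow> complex mat" where
  "rmat2 a b c d = mat 2 2 (\<lambda>(i, j). complex_of_real
     (if i = 0 then if j = 0 then a else b else if j = 0 then c else d))"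

lemma rmat2_carrier [simp]: "rmat2 a b c d \<in> carrier_mat 2 2"
  and dim_rmat2 [simp]: "dim_row (rmat2 a b c d) = 2" "dim_col (rmat2 a b c d) = 2"
  by (simp_all add: rmat2_def)

lemma index_rmat2 [simp]:
  "rmat2 a b c d $$ (0, 0) = complex_of_real a" "rmat2 a b c d $$ (0, 1) = complex_of_real b"
  "rmat2 a b c d $$ (1, 0) = complex_of_real c" "rmat2 a b c d $$ (1, 1) = complex_of_real d"
  by (simp_all add: rmat2_def)

lemma less_two_iff: "(i :: nat) < 2 \<longleftrightarrow> i = 0 \<or> i = 1"
  by auto

lemma rmat2_eq_iff: "rmat2 a b c d = rmat2 a' b' c' d' \<longleftrightarrow> a = a' \<and> b = b' \<and> c = c' \<and> d = d'"
  by (metis index_rmat2 of_real_eq_iff)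

lemma rmat2_mult:
  "rmat2 a b c d * rmat2 a' b' c' d' = rmat2 (a*a' + b*c') (a*b' + b*d') (c*a' + d*c') (c*b' + d*d')"
  by (rule eq_matI) (auto simp: rmat2_def less_two_iff scalar_prod_def numeral_2_eq_2)

lemma rmat2_add: "rmat2 a b c d + rmat2 a' b' c' d' = rmat2 (a + a') (b + b') (c + c') (d + d')"
  by (rule eq_matI) (auto simp: rmat2_def less_two_iff)

lemma smult_rmat2: "complex_of_real k \<cdot>\<^sub>m rmat2 a b c d = rmat2 (k*a) (k*b) (k*c) (k*d)"
  by (rule eq_matI) (auto simp: rmat2_def less_two_iff)

lemma one_mat_2: "1\<^sub>m 2 = rmat2 1 0 0 1"
  by (rule eq_matI) (auto simp: rmat2_def less_two_iff)

lemma mat_diag_2: "mat_diag 2 (\<lambda>i. complex_of_real (f i)) = rmat2 (f 0) 0 0 (f 1)"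
  by (rule eq_matI) (auto simp: rmat2_def less_two_iff mat_diag_def)

lemma mat_adjoint_rmat2: "mat_adjoint (rmat2 a b c d) = rmat2 a c b d"
  by (rule eq_matI) (auto simp: rmat2_def less_two_iff)

definition rot_sym2 :: "real \<Rightarrow> real \<Rightarrow> real \<Rightarrow> real \<Rightarrow> complex mat" where
  "rot_sym2 u v x y = rmat2 (u*u*x + v*v*y) (u*v*(x - y)) (u*v*(x - y)) (v*v*x + u*u*y)"

lemma rot_sym2_1_0 [simp]: "rot_sym2 1 0 x y = rmat2 x 0 0 y"
  by (simp add: rot_sym2_def)

lemma spectral_decomp_rot_sym2:
  assumes "u*u + v*v = 1"
  shows "spectral_decomp 2 (rmat2 u (-v) v u) (\<lambda>i. if i = 0 then x else y) (rot_sym2 u v x y)"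
  using assms unfolding spectral_decomp_def
  by (simp add: mat_adjoint_rmat2 rmat2_mult mat_diag_2 one_mat_2 rmat2_eq_iff rot_sym2_def
      algebra_simps)

lemma mat_rpow_rot_sym2:
  assumes "u*u + v*v = 1"
  shows "mat_rpow (rot_sym2 u v x y) r = rot_sym2 u v (x powr r) (y powr r)"
proof -
  have "mat_rpow (rot_sym2 u v x y) r
      = rmat2 u (-v) v u * mat_diag 2 (\<lambda>i. complex_of_real ((if i = 0 then x else y) powr r))
        * mat_adjoint (rmat2 u (-v) v u)"
    by (rule mat_rpow_spectral_decomp[OF spectral_decomp_rot_sym2[OF assms]])
  also have "(\<lambda>i. complex_of_real ((if i = 0 then x else y) powr r))
           = (\<lambda>i. complex_of_real (if i = 0 then x powr r else y powr r))"
    by auto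
  also have "rmat2 u (-v) v u * mat_diag 2 \<dots> * mat_adjoint (rmat2 u (-v) v u)
           = rot_sym2 u v (x powr r) (y powr r)"
    using spectral_decomp_rot_sym2[OF assms] by (simp add: spectral_decomp_def)
  finally show ?thesis .
qed

lemma eig_1_rot_sym2: "u*u + v*v = 1 \<Longrightarrow> eig 1 (rot_sym2 u v x y) = max x y"
  using eig_1_spectral_decomp[OF spectral_decomp_rot_sym2] by simp

lemma rot_sym2_mult:
  assumes "u*u + v*v = 1"
  shows "rot_sym2 u v x y * rot_sym2 u v x' y' = rot_sym2 u v (x*x') (y*y')"
proof -
  have "rot_sym2 u v x y * rot_sym2 u v x' y'
      = rmat2 ((u*u*(x*x') + v*v*(y*y')) * (u*u + v*v)) (u*v*(x*x' - y*y') * (u*u + v*v))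
              (u*v*(x*x' - y*y') * (u*u + v*v)) ((v*v*(x*x') + u*u*(y*y')) * (u*u + v*v))"
    unfolding rot_sym2_def rmat2_mult rmat2_eq_iff by (simp add: algebra_simps)
  thus ?thesis by (simp add: assms rot_sym2_def)
qed

lemma rot_sym2_affine:
  assumes "u*u + v*v = 1"
  shows "rot_sym2 u v (k0 + k1*x) (k0 + k1*y)
       = complex_of_real k0 \<cdot>\<^sub>m 1\<^sub>m 2 + complex_of_real k1 \<cdot>\<^sub>m rot_sym2 u v x y"
proof -
  have "rot_sym2 u v (k0 + k1*x) (k0 + k1*y)
      = rmat2 (k0 * (u*u + v*v) + k1 * (u*u*x + v*v*y)) (k1 * (u*v*(x - y)))
              (k1 * (u*v*(x - y))) (k0 * (u*u + v*v) + k1 * (v*v*x + u*u*y))"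
    unfolding rot_sym2_def rmat2_eq_iff by (simp add: algebra_simps)
  thus ?thesis by (simp add: assms rot_sym2_def one_mat_2 smult_rmat2 rmat2_add)
qed

definition sym2_lmax :: "real \<Rightarrow> real \<Rightarrow> real \<Rightarrow> real" where
  "sym2_lmax a b c = (a + c) / 2 + sqrt (((a - c) / 2)\<^sup>2 + b\<^sup>2)"

definition sym2_lmin :: "real \<Rightarrow> real \<Rightarrow> real \<Rightarrow> real" where
  "sym2_lmin a b c = (a + c) / 2 - sqrt (((a - c) / 2)\<^sup>2 + b\<^sup>2)"

lemma sym2_lmax_add_lmin: "sym2_lmax a b c + sym2_lmin a b c = a + c"
  by (simp add: sym2_lmax_def sym2_lmin_def)

lemma sym2_lmax_mult_lmin: "sym2_lmax a b c * sym2_lmin a b c = a*c - b*b"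
proof -
  have "sym2_lmax a b c * sym2_lmin a b c = ((a + c) / 2)\<^sup>2 - (sqrt (((a - c) / 2)\<^sup>2 + b\<^sup>2))\<^sup>2"
    by (simp add: sym2_lmax_def sym2_lmin_def power2_eq_square algebra_simps)
  also have "(sqrt (((a - c) / 2)\<^sup>2 + b\<^sup>2))\<^sup>2 = ((a - c) / 2)\<^sup>2 + b\<^sup>2"
    by simp
  also have "((a + c) / 2)\<^sup>2 - (((a - c) / 2)\<^sup>2 + b\<^sup>2) = a*c - b*b"
    by (simp add: power2_eq_square field_simps)
  finally show ?thesis .
qed

lemma sym2_lmax_trace_det: "sym2_lmax a b c = (a + c) / 2 + sqrt ((a + c)\<^sup>2 / 4 - (a*c - b*b))"
proof -
  have "((a - c) / 2)\<^sup>2 + b\<^sup>2 = (a + c)\<^sup>2 / 4 - (a*c - b*b)"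
    by (simp add: power2_eq_square field_simps)
  thus ?thesis by (simp add: sym2_lmax_def)
qed

lemma sym2_lmin_le_lmax: "sym2_lmin a b c \<le> sym2_lmax a b c"
  by (simp add: sym2_lmax_def sym2_lmin_def)

lemma sym2_lmin_less_lmax: "b \<noteq> 0 \<Longrightarrow> sym2_lmin a b c < sym2_lmax a b c"
  by (simp add: sym2_lmax_def sym2_lmin_def add_nonneg_pos)

lemma sym2_lmin_le_diag: "sym2_lmin a b c \<le> a" "sym2_lmin a b c \<le> c"
  and sym2_lmax_ge_diag: "a \<le> sym2_lmax a b c"
proof -
  have "\<bar>(a - c) / 2\<bar> \<le> sqrt (((a - c) / 2)\<^sup>2 + b\<^sup>2)"
    by (metis le_add_same_cancel1 real_sqrt_abs real_sqrt_le_mono zero_le_power2)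
  thus "sym2_lmin a b c \<le> a" "sym2_lmin a b c \<le> c" "a \<le> sym2_lmax a b c"
    by (auto simp: sym2_lmax_def sym2_lmin_def abs_le_iff field_simps)
qed

lemma sym2_lmin_nonneg_iff: "0 \<le> sym2_lmin a b c \<longleftrightarrow> 0 \<le> a \<and> 0 \<le> c \<and> b*b \<le> a*c"
proof
  assume "0 \<le> sym2_lmin a b c"
  moreover have "0 \<le> sym2_lmax a b c * sym2_lmin a b c"
    using calculation sym2_lmin_le_lmax[of a b c] by simp
  ultimately show "0 \<le> a \<and> 0 \<le> c \<and> b*b \<le> a*c"
    using sym2_lmin_le_diag[of a b c] by (simp add: sym2_lmax_mult_lmin)
next
  assume "0 \<le> a \<and> 0 \<le> c \<and> b*b \<le> a*c"
  hence "((a - c) / 2)\<^sup>2 + b\<^sup>2 \<le> ((a + c) / 2)\<^sup>2" and "0 \<le> (a + c) / 2"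
    by (auto simp: power2_eq_square field_simps)
  hence "sqrt (((a - c) / 2)\<^sup>2 + b\<^sup>2) \<le> (a + c) / 2"
    by (metis real_sqrt_abs real_sqrt_le_mono abs_of_nonneg)
  thus "0 \<le> sym2_lmin a b c" by (simp add: sym2_lmin_def)
qed

lemma sym2_lmax_lmin_rot_sym2:
  assumes "u*u + v*v = 1" and "rot_sym2 u v x y = rmat2 a b b c"
  shows "sym2_lmax a b c = max x y" "sym2_lmin a b c = min x y"
proof -
  have entries: "a = u*u*x + v*v*y" "b = u*v*(x - y)" "c = v*v*x + u*u*y"
    using assms(2) by (simp_all add: rot_sym2_def rmat2_eq_iff)
  have "a + c = (x + y) * (u*u + v*v)"
    unfolding entries by (simp add: algebra_simps)
  hence trace: "(a + c) / 2 = (x + y) / 2" using assms(1) by simp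
  have "((a - c) / 2)\<^sup>2 + b\<^sup>2 = ((x - y) / 2)\<^sup>2 * (u*u + v*v)\<^sup>2"
    unfolding entries by (simp add: power2_eq_square field_simps)
  hence "sqrt (((a - c) / 2)\<^sup>2 + b\<^sup>2) = \<bar>x - y\<bar> / 2"
    using assms(1) by simp
  thus "sym2_lmax a b c = max x y" "sym2_lmin a b c = min x y"
    unfolding sym2_lmax_def sym2_lmin_def trace by (auto simp: max_def min_def field_simps)
qed

text \<open>For \<open>b \<noteq> 0\<close> the first column of the rotation is the normalised eigenvector \<open>(b, l - a)\<close>
  of the larger eigenvalue \<open>l\<close>.\<close>
lemma sym2_rotation:
  obtains u v where "u*u + v*v = 1" "rmat2 a b b c = rot_sym2 u v (sym2_lmax a b c) (sym2_lmin a b c)"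
proof (cases "b = 0")
  case b: True
  have "((a - c) / 2)\<^sup>2 + b\<^sup>2 = (\<bar>a - c\<bar> / 2)\<^sup>2"
    using b by (simp add: power2_eq_square)
  hence sq: "sqrt (((a - c) / 2)\<^sup>2 + b\<^sup>2) = \<bar>a - c\<bar> / 2"
    by simp
  show ?thesis
  proof (cases "c \<le> a")
    case True
    hence "sym2_lmax a b c = a" "sym2_lmin a b c = c"
      unfolding sym2_lmax_def sym2_lmin_def sq by (simp_all add: field_simps)
    thus ?thesis using that[of 1 0] b by simp
  next
    case False
    hence "sym2_lmax a b c = c" "sym2_lmin a b c = a"
      unfolding sym2_lmax_def sym2_lmin_def sq by (simp_all add: field_simps)
    thus ?thesis using that[of 0 1] b by (simp add: rot_sym2_def)
  qed
next
  case False
  define l where "l = sym2_lmax a b c"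
  define m where "m = sym2_lmin a b c"
  define n where "n = sqrt (b*b + (l - a)*(l - a))"
  have nn: "n * n = b*b + (l - a)*(l - a)"
    unfolding n_def by simp
  have "0 < b*b" using False not_real_square_gt_zero by blast
  hence n0: "n \<noteq> 0" using nn by auto
  have m: "m = a + c - l"
    using sym2_lmax_add_lmin[of a b c] by (simp add: l_def m_def)
  have bb: "b*b = (l - a)*(l - c)"
    using sym2_lmax_mult_lmin[of a b c] unfolding l_def[symmetric] m_def[symmetric] m
    by (simp add: algebra_simps)
  have "b*b*l + (l - a)*(l - a)*m - a * (n*n) = (l - a) * (b*b - (l - a)*(l - c))"
    "b*(l - a)*(l - m) - b * (n*n) = b * ((l - a)*(l - c) - b*b)"
    "(l - a)*(l - a)*l + b*b*m - c * (n*n) = (l - a) * ((l - a)*(l - c) - b*b)"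
    unfolding nn m by (simp_all add: algebra_simps)
  hence "b*b*l + (l - a)*(l - a)*m = a * (n*n)" "b*(l - a)*(l - m) = b * (n*n)"
    "(l - a)*(l - a)*l + b*b*m = c * (n*n)"
    unfolding bb by simp_all
  hence "rmat2 a b b c = rot_sym2 (b/n) ((l - a)/n) l m"
    using n0 by (simp add: rot_sym2_def rmat2_eq_iff field_simps)
  moreover have "(b/n) * (b/n) + ((l - a)/n) * ((l - a)/n) = 1"
    using n0 nn by (simp add: field_simps)
  ultimately show ?thesis using that l_def m_def by blast
qed

lemma mat_rpow_sym2:
  obtains u v where "u*u + v*v = 1"
    "\<And>r. mat_rpow (rmat2 a b b c) r = rot_sym2 u v (sym2_lmax a b c powr r) (sym2_lmin a b c powr r)"
  by (metis sym2_rotation mat_rpow_rot_sym2)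

lemma dim_row_mat_rpow_sym2 [simp]: "dim_row (mat_rpow (rmat2 a b b c) r) = 2"
  by (metis mat_rpow_sym2 rot_sym2_def dim_rmat2(1))

lemma eig_1_mat_rpow_sym2:
  assumes "0 \<le> sym2_lmin a b c" "0 \<le> r"
  shows "eig 1 (mat_rpow (rmat2 a b b c) r) = sym2_lmax a b c powr r"
proof -
  obtain u v where uv: "u*u + v*v = 1"
    and rpow: "mat_rpow (rmat2 a b b c) r = rot_sym2 u v (sym2_lmax a b c powr r) (sym2_lmin a b c powr r)"
    using mat_rpow_sym2 by metis
  have "sym2_lmin a b c powr r \<le> sym2_lmax a b c powr r"
    using assms sym2_lmin_le_lmax by (intro powr_mono2) auto
  thus ?thesis unfolding rpow eig_1_rot_sym2[OF uv] by simp
qed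

lemma sym2_lmin_mat_rpow_nonneg:
  assumes "mat_rpow (rmat2 a b b c) r = rmat2 a' b' b' c'"
  shows "0 \<le> sym2_lmin a' b' c'"
proof -
  obtain u v where uv: "u*u + v*v = 1"
    and "mat_rpow (rmat2 a b b c) r = rot_sym2 u v (sym2_lmax a b c powr r) (sym2_lmin a b c powr r)"
    using mat_rpow_sym2 by metis
  thus ?thesis using sym2_lmax_lmin_rot_sym2(2)[OF uv] assms by simp
qed

lemma mat_rpow_sym2_half:
  assumes "0 \<le> sym2_lmin a b c"
  obtains s1 s2 s3 where "mat_rpow (rmat2 a b b c) (1/2) = rmat2 s1 s2 s2 s3"
    "rmat2 s1 s2 s2 s3 * rmat2 s1 s2 s2 s3 = rmat2 a b b c"
proof -
  define l where "l = sym2_lmax a b c"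
  define m where "m = sym2_lmin a b c"
  obtain u v where uv: "u*u + v*v = 1" and sym: "rmat2 a b b c = rot_sym2 u v l m"
    using sym2_rotation unfolding l_def m_def by metis
  have "0 \<le> m" "0 \<le> l" using assms sym2_lmin_le_lmax[of a b c] by (auto simp: l_def m_def)
  hence sq: "l powr (1/2) * l powr (1/2) = l" "m powr (1/2) * m powr (1/2) = m"
    by (simp_all flip: powr_add)
  have "mat_rpow (rmat2 a b b c) (1/2) = rot_sym2 u v (l powr (1/2)) (m powr (1/2))"
    unfolding sym by (rule mat_rpow_rot_sym2[OF uv])
  moreover have "rot_sym2 u v (l powr (1/2)) (m powr (1/2)) * rot_sym2 u v (l powr (1/2)) (m powr (1/2))
               = rmat2 a b b c"
    unfolding rot_sym2_mult[OF uv] sq sym ..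
  ultimately show ?thesis using that unfolding rot_sym2_def by blast
qed

definition secant_slope :: "(real \<Rightarrow> real) \<Rightarrow> real \<Rightarrow> real \<Rightarrow> real" where
  "secant_slope f x y = (f x - f y) / (x - y)"

definition secant_intercept :: "(real \<Rightarrow> real) \<Rightarrow> real \<Rightarrow> real \<Rightarrow> real" where
  "secant_intercept f x y = (x * f y - y * f x) / (x - y)"

lemma secant_line:
  assumes "x \<noteq> y"
  shows "secant_intercept f x y + secant_slope f x y * x = f x"
    "secant_intercept f x y + secant_slope f x y * y = f y"
proof -
  have "x - y \<noteq> 0" using assms by simp
  moreover have "x * f y - y * f x + (f x - f y) * x = f x * (x - y)"
    "x * f y - y * f x + (f x - f y) * y = f y * (x - y)"
    by (simp_all add: algebra_simps)
  ultimately show "secant_intercept f x y + secant_slope f x y * x = f x"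
    "secant_intercept f x y + secant_slope f x y * y = f y"
    by (simp_all add: secant_slope_def secant_intercept_def add_divide_distrib[symmetric])
qed

text \<open>A function of a matrix with two distinct eigenvalues only sees its values there, so it may be
  replaced by the secant line through those two points of its graph.\<close>
lemma mat_rpow_sym2_secant:
  fixes a b c r :: real
  assumes "b \<noteq> 0"
  defines "k0 \<equiv> secant_intercept (\<lambda>t. t powr r) (sym2_lmax a b c) (sym2_lmin a b c)"
    and "k1 \<equiv> secant_slope (\<lambda>t. t powr r) (sym2_lmax a b c) (sym2_lmin a b c)"
  shows "mat_rpow (rmat2 a b b c) r = rmat2 (k0 + k1*a) (k1*b) (k1*b) (k0 + k1*c)"
proof -
  define l where "l = sym2_lmax a b c"
  define m where "m = sym2_lmin a b c"
  obtain u v where uv: "u*u + v*v = 1" and sym: "rmat2 a b b c = rot_sym2 u v l m"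
    using sym2_rotation unfolding l_def m_def by metis
  have "l \<noteq> m" using sym2_lmin_less_lmax[OF assms(1), of a c] by (simp add: l_def m_def)
  hence "l powr r = k0 + k1*l" "m powr r = k0 + k1*m"
    using secant_line[of l m "\<lambda>t. t powr r"] by (simp_all add: k0_def k1_def l_def m_def)
  hence "mat_rpow (rmat2 a b b c) r = rot_sym2 u v (k0 + k1*l) (k0 + k1*m)"
    unfolding sym by (simp add: mat_rpow_rot_sym2[OF uv])
  also have "\<dots> = complex_of_real k0 \<cdot>\<^sub>m 1\<^sub>m 2 + complex_of_real k1 \<cdot>\<^sub>m rmat2 a b b c"
    unfolding sym by (rule rot_sym2_affine[OF uv])
  finally show ?thesis by (simp add: one_mat_2 smult_rmat2 rmat2_add)
qed

lemma sym2_quadratic_form_pos: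
  fixes a b c x y :: real
  assumes "0 < a" "b*b < a*c" "x \<noteq> 0 \<or> y \<noteq> 0"
  shows "0 < a*x*x + 2*b*x*y + c*y*y"
proof -
  have "a * (a*x*x + 2*b*x*y + c*y*y) = (a*x + b*y)\<^sup>2 + (a*c - b*b)*y\<^sup>2"
    by (simp add: power2_eq_square algebra_simps)
  also have "\<dots> > 0"
    using assms by (cases "y = 0") (auto intro: add_nonneg_pos)
  finally show ?thesis using assms(1) by (simp add: zero_less_mult_iff)
qed

lemma pos_def_sym2:
  assumes "0 < a" "b*b < a*c"
  shows "pos_def_mat (rmat2 a b b c)"
  unfolding pos_def_mat_def hermitian_mat_def
proof (intro conjI ballI impI)
  show "rmat2 a b b c \<in> carrier_mat (dim_row (rmat2 a b b c)) (dim_row (rmat2 a b b c))"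
    by simp
  show "mat_adjoint (rmat2 a b b c) = rmat2 a b b c"
    by (simp add: mat_adjoint_rmat2)
  fix w :: "complex vec"
  assume w: "w \<in> carrier_vec (dim_row (rmat2 a b b c))" "w \<noteq> 0\<^sub>v (dim_row (rmat2 a b b c))"
  have "w $ 0 \<noteq> 0 \<or> w $ 1 \<noteq> 0"
  proof (rule ccontr)
    assume "\<not> ?thesis"
    hence "w = 0\<^sub>v 2" using w(1) by (intro eq_vecI) (auto simp: less_two_iff)
    thus False using w(2) by simp
  qed
  hence nz: "Re (w $ 0) \<noteq> 0 \<or> Re (w $ 1) \<noteq> 0 \<or> Im (w $ 0) \<noteq> 0 \<or> Im (w $ 1) \<noteq> 0"
    by (auto simp: complex_eq_iff)
  define q where "q x y = a*x*x + 2*b*x*y + c*y*y" for x y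
  have q_nonneg: "0 \<le> q x y" for x y
    using sym2_quadratic_form_pos[OF assms, of x y] by (cases "x = 0 \<and> y = 0") (auto simp: q_def)
  have "Re ((rmat2 a b b c *\<^sub>v w) \<bullet>c w) = q (Re (w $ 0)) (Re (w $ 1)) + q (Im (w $ 0)) (Im (w $ 1))"
    using w(1) by (simp add: q_def scalar_prod_def mult_mat_vec_def numeral_2_eq_2 rmat2_def row_def
        algebra_simps)
  also have "\<dots> > 0"
  proof -
    have "0 < q (Re (w $ 0)) (Re (w $ 1)) \<or> 0 < q (Im (w $ 0)) (Im (w $ 1))"
      using nz sym2_quadratic_form_pos[OF assms] unfolding q_def by blast
    thus ?thesis using q_nonneg by (auto intro: add_pos_nonneg add_nonneg_pos)
  qed
  finally show "Re ((rmat2 a b b c *\<^sub>v w) \<bullet>c w) > 0" .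
qed

lemma pos_def_rot_sym2:
  assumes "u*u + v*v = 1" "0 < x" "0 < y"
  shows "pos_def_mat (rot_sym2 u v x y)"
proof -
  define a b c where "a = u*u*x + v*v*y" and "b = u*v*(x - y)" and "c = v*v*x + u*u*y"
  have "sym2_lmin a b c = min x y"
    using sym2_lmax_lmin_rot_sym2(2)[OF assms(1)] by (simp add: rot_sym2_def a_def b_def c_def)
  hence "0 < sym2_lmin a b c" "0 < sym2_lmax a b c"
    using assms sym2_lmin_le_lmax[of a b c] by auto
  hence "0 < a" "0 < sym2_lmax a b c * sym2_lmin a b c"
    using sym2_lmin_le_diag(1)[of a b c] by auto
  hence "0 < a" "b*b < a*c"
    unfolding sym2_lmax_mult_lmin by auto
  thus ?thesis unfolding rot_sym2_def a_def b_def c_def by (rule pos_def_sym2)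
qed

lemma mat_rpow_diag2: "mat_rpow (rmat2 x 0 0 y) r = rmat2 (x powr r) 0 0 (y powr r)"
  using mat_rpow_rot_sym2[of 1 0 x y r] by simp

lemma rmat2_diag_congr: "rmat2 1 0 0 t * rmat2 a b b c * rmat2 1 0 0 t = rmat2 a (t*b) (t*b) (t*t*c)"
  by (simp add: rmat2_mult rmat2_eq_iff)

lemma sym2_lmin_congr_nonneg:
  assumes "0 \<le> sym2_lmin a b c"
  shows "0 \<le> sym2_lmin a (t*b) (t*t*c)"
proof -
  have "0 \<le> a" "0 \<le> c" "b*b \<le> a*c"
    using assms by (simp_all add: sym2_lmin_nonneg_iff)
  moreover have "(b*b) * (t*t) \<le> (a*c) * (t*t)"
    using calculation(3) by (simp add: mult_right_mono)
  hence "(t*b) * (t*b) \<le> a * (t*t*c)"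
    by (simp add: algebra_simps)
  ultimately show ?thesis
    unfolding sym2_lmin_nonneg_iff by simp
qed

text \<open>\<open>\<lambda>\<^sub>1(S X S) = \<lambda>\<^sub>1(X\<^sup>1\<^sup>/\<^sup>2 S\<^sup>2 X\<^sup>1\<^sup>/\<^sup>2)\<close> is at least the corner entry of \<open>S\<^sup>2\<close>
  when \<open>X = diag(1, x)\<close>.\<close>
lemma sym2_sandwich_diag:
  assumes "rmat2 s1 s2 s2 s3 * rmat2 s1 s2 s2 s3 = rmat2 g1 g2 g2 g3" "0 \<le> x"
  obtains f1 f2 f3
  where "rmat2 s1 s2 s2 s3 * rmat2 1 0 0 x * rmat2 s1 s2 s2 s3 = rmat2 f1 f2 f2 f3"
    "0 \<le> sym2_lmin f1 f2 f3" "g1 \<le> sym2_lmax f1 f2 f3"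
proof -
  have g: "g1 = s1*s1 + s2*s2" "g2 = s1*s2 + s2*s3" "g3 = s2*s2 + s3*s3"
    using assms(1) by (simp_all add: rmat2_mult rmat2_eq_iff)
  define f1 f2 f3 where "f1 = s1*s1 + x*(s2*s2)" and "f2 = s1*s2 + x*(s2*s3)"
    and "f3 = s2*s2 + x*(s3*s3)"
  have prod: "rmat2 s1 s2 s2 s3 * rmat2 1 0 0 x * rmat2 s1 s2 s2 s3 = rmat2 f1 f2 f2 f3"
    by (simp add: rmat2_mult rmat2_eq_iff f1_def f2_def f3_def algebra_simps)
  have det: "f1*f3 - f2*f2 = x * (s1*s3 - s2*s2)\<^sup>2"
    by (simp add: f1_def f2_def f3_def power2_eq_square algebra_simps)
  have "0 \<le> x * (s1*s3 - s2*s2)\<^sup>2" using assms(2) by simp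
  hence "f2*f2 \<le> f1*f3" using det by linarith
  moreover have "0 \<le> f1" "0 \<le> f3"
    using assms(2) by (simp_all add: f1_def f3_def)
  ultimately have "0 \<le> sym2_lmin f1 f2 f3"
    unfolding sym2_lmin_nonneg_iff by simp
  moreover have "sym2_lmax f1 f2 f3 = sym2_lmax g1 (sqrt x * g2) (x * g3)"
  proof -
    have "f1 + f3 = g1 + x * g3" "f1*f3 - f2*f2 = g1 * (x * g3) - (sqrt x * g2) * (sqrt x * g2)"
      unfolding det using assms(2) by (simp_all add: g f1_def f3_def power2_eq_square algebra_simps)
    thus ?thesis unfolding sym2_lmax_trace_det by simp
  qed
  ultimately show ?thesis using that prod sym2_lmax_ge_diag by metis
qed

lemma sym2_lmin_scaled_rot_nonneg:
  assumes "0 \<le> d" "c*c + s*s = 1"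
  shows "0 \<le> sym2_lmin (c*c + s*s*d) (sqrt d * (c*s*(1 - d))) (d * (s*s + c*c*d))"
proof -
  have "0 \<le> sym2_lmin (c*c + s*s*d) (c*s*(1 - d)) (s*s + c*c*d)"
    using sym2_lmax_lmin_rot_sym2(2)[OF assms(2), of 1 d] assms(1) by (simp add: rot_sym2_def)
  from sym2_lmin_congr_nonneg[OF this, of "sqrt d"] show ?thesis
    using assms(1) by simp
qed

text \<open>The corner entry of \<open>(A\<^sup>p\<^sup>/\<^sup>2 B\<^sup>p A\<^sup>p\<^sup>/\<^sup>2)\<^sup>\<alpha>\<close> for \<open>A\<^sup>p = diag(1, d)\<close> and \<open>B\<^sup>p\<close>
  the rotation of \<open>diag(1, d)\<close> by \<open>(c, s)\<close>; its \<open>1/p\<close>-th power bounds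
  \<open>\<lambda>\<^sub>1(SG\<^sub>\<alpha>\<^sub>,\<^sub>p(A, B))\<close> from below.\<close>
definition sg_lower :: "real \<Rightarrow> real \<Rightarrow> real \<Rightarrow> real \<Rightarrow> real" where
  "sg_lower \<alpha> c s d =
    (let a = c*c + s*s*d; b = sqrt d * (c*s*(1 - d)); c' = d * (s*s + c*c*d);
         l = sym2_lmax a b c'; m = sym2_lmin a b c'
     in secant_intercept (\<lambda>t. t powr \<alpha>) l m + secant_slope (\<lambda>t. t powr \<alpha>) l m * a)"

lemma mat_gmean_rot_sym2:
  assumes "0 < d" "d \<noteq> 1" "c \<noteq> 0" "s \<noteq> 0" "c*c + s*s = 1"
  obtains g2 g3
  where "mat_gmean \<alpha> (mat_rpow (rmat2 1 0 0 d) (-1)) (rot_sym2 c s 1 d) = rmat2 (sg_lower \<alpha> c s d) g2 g2 g3"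
    "0 \<le> sym2_lmin (sg_lower \<alpha> c s d) g2 g3"
proof -
  define a b c' where "a = c*c + s*s*d" and "b = sqrt d * (c*s*(1 - d))"
    and "c' = d * (s*s + c*c*d)"
  have "(d powr -1) powr (1/2) = 1 / sqrt d" "(d powr -1) powr (-1/2) = sqrt d"
    using assms(1) by (simp_all add: powr_powr powr_minus_divide powr_half_sqrt real_sqrt_divide)
  hence half: "mat_rpow (mat_rpow (rmat2 1 0 0 d) (-1)) (1/2) = rmat2 1 0 0 (1 / sqrt d)"
    and mhalf: "mat_rpow (mat_rpow (rmat2 1 0 0 d) (-1)) (-1/2) = rmat2 1 0 0 (sqrt d)"
    by (simp_all add: mat_rpow_diag2)
  have M: "rmat2 1 0 0 (sqrt d) * rot_sym2 c s 1 d * rmat2 1 0 0 (sqrt d) = rmat2 a b b c'"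
    using assms(1) by (simp add: rot_sym2_def rmat2_diag_congr a_def b_def c'_def)
  have "b \<noteq> 0" using assms by (simp add: b_def)
  from mat_rpow_sym2_secant[OF this, of a c' \<alpha>]
  obtain m2 m3 where Mpow: "mat_rpow (rmat2 a b b c') \<alpha> = rmat2 (sg_lower \<alpha> c s d) m2 m2 m3"
    unfolding sg_lower_def Let_def a_def[symmetric] b_def[symmetric] c'_def[symmetric] by blast
  hence "0 \<le> sym2_lmin (sg_lower \<alpha> c s d) m2 m3"
    by (rule sym2_lmin_mat_rpow_nonneg)
  hence "0 \<le> sym2_lmin (sg_lower \<alpha> c s d) (1 / sqrt d * m2) (1 / sqrt d * (1 / sqrt d) * m3)"
    by (rule sym2_lmin_congr_nonneg)
  moreover have "mat_gmean \<alpha> (mat_rpow (rmat2 1 0 0 d) (-1)) (rot_sym2 c s 1 d)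
      = rmat2 (sg_lower \<alpha> c s d) (1 / sqrt d * m2) (1 / sqrt d * m2) (1 / sqrt d * (1 / sqrt d) * m3)"
    unfolding mat_gmean_def half mhalf M Mpow rmat2_diag_congr ..
  ultimately show ?thesis using that by blast
qed

lemma SG_tilde_rot_sym2_lower_bound:
  assumes "0 < p" "0 < d" "d \<noteq> 1" "c \<noteq> 0" "s \<noteq> 0" "c*c + s*s = 1"
  defines "A \<equiv> rmat2 1 0 0 (d powr (1/p))" and "B \<equiv> rot_sym2 c s 1 (d powr (1/p))"
  shows "sg_lower \<alpha> c s d powr (1/p) \<le> eig 1 (SG_tilde \<alpha> p A B)"
    and "dim_row (SG_tilde \<alpha> p A B) = 2"
proof -
  have "(d powr (1/p)) powr p = d" using assms(1,2) by (simp add: powr_powr)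
  hence Ap: "mat_rpow A p = rmat2 1 0 0 d" and Bp: "mat_rpow B p = rot_sym2 c s 1 d"
    unfolding A_def B_def by (simp_all add: mat_rpow_diag2 mat_rpow_rot_sym2[OF assms(6)])
  obtain g2 g3 where G: "mat_gmean \<alpha> (mat_rpow (rmat2 1 0 0 d) (-1)) (rot_sym2 c s 1 d)
      = rmat2 (sg_lower \<alpha> c s d) g2 g2 g3" and G_psd: "0 \<le> sym2_lmin (sg_lower \<alpha> c s d) g2 g3"
    using mat_gmean_rot_sym2[OF assms(2-6)] by metis
  obtain s1 s2 s3 where S: "mat_rpow (rmat2 (sg_lower \<alpha> c s d) g2 g2 g3) (1/2) = rmat2 s1 s2 s2 s3"
    and S_square: "rmat2 s1 s2 s2 s3 * rmat2 s1 s2 s2 s3 = rmat2 (sg_lower \<alpha> c s d) g2 g2 g3"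
    using mat_rpow_sym2_half[OF G_psd] by metis
  obtain f1 f2 f3 where F: "rmat2 s1 s2 s2 s3 * rmat2 1 0 0 (d powr (2 * (1 - \<alpha>))) * rmat2 s1 s2 s2 s3
      = rmat2 f1 f2 f2 f3" and F_psd: "0 \<le> sym2_lmin f1 f2 f3"
    and F_lmax: "sg_lower \<alpha> c s d \<le> sym2_lmax f1 f2 f3"
    using sym2_sandwich_diag[OF S_square] by (metis powr_ge_zero)
  have X: "mat_rpow (rmat2 1 0 0 d) (2 * (1 - \<alpha>)) = rmat2 1 0 0 (d powr (2 * (1 - \<alpha>)))"
    by (simp add: mat_rpow_diag2)
  have SG: "SG_tilde \<alpha> p A B = mat_rpow (rmat2 f1 f2 f2 f3) (1/p)"
    unfolding SG_tilde_def F_tilde_def Let_def Ap Bp G S X F ..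
  have "0 \<le> sg_lower \<alpha> c s d"
    using G_psd sym2_lmin_le_diag(1) order_trans by blast
  hence "sg_lower \<alpha> c s d powr (1/p) \<le> sym2_lmax f1 f2 f3 powr (1/p)"
    using F_lmax assms(1) by (intro powr_mono2) auto
  thus "sg_lower \<alpha> c s d powr (1/p) \<le> eig 1 (SG_tilde \<alpha> p A B)"
    unfolding SG using eig_1_mat_rpow_sym2[OF F_psd] assms(1) by simp
  show "dim_row (SG_tilde \<alpha> p A B) = 2"
    unfolding SG by simp
qed

definition pmean_lmax :: "real \<Rightarrow> real \<Rightarrow> real \<Rightarrow> real \<Rightarrow> real" where
  "pmean_lmax \<alpha> c s z =
     sym2_lmax ((1 - \<alpha>) + \<alpha>*(c*c + s*s*z)) (\<alpha>*(c*s*(1 - z))) ((1 - \<alpha>)*z + \<alpha>*(s*s + c*c*z))"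

lemma eig_1_mat_pmean_rot_sym2:
  assumes "0 \<le> \<alpha>" "\<alpha> \<le> 1" "0 < q" "0 < e" "c*c + s*s = 1"
  shows "eig 1 (mat_pmean \<alpha> q (rmat2 1 0 0 e) (rot_sym2 c s 1 e)) = pmean_lmax \<alpha> c s (e powr q) powr (1/q)"
proof -
  define z where "z = e powr q"
  define a b c' where "a = c*c + s*s*z" and "b = c*s*(1 - z)" and "c' = s*s + c*c*z"
  define n1 n2 n3 where "n1 = (1 - \<alpha>) + \<alpha>*a" and "n2 = \<alpha>*b" and "n3 = (1 - \<alpha>)*z + \<alpha>*c'"
  have z: "0 < z" using assms(4) by (simp add: z_def)
  have rot: "rot_sym2 c s 1 z = rmat2 a b b c'"
    by (simp add: rot_sym2_def a_def b_def c'_def)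
  have "a*c' - b*b = max 1 z * min 1 z"
    using sym2_lmax_lmin_rot_sym2[OF assms(5) rot] sym2_lmax_mult_lmin[of a b c'] by simp
  hence det_rot: "a*c' - b*b = z" by (simp add: max_def min_def)
  have "0 \<le> a" "0 \<le> c'" using z by (simp_all add: a_def c'_def)
  have "n1*n3 - n2*n2 = (1 - \<alpha>)*(1 - \<alpha>)*z + (1 - \<alpha>)*\<alpha>*(c' + z*a) + \<alpha>*\<alpha>*(a*c' - b*b)"
    by (simp add: n1_def n2_def n3_def algebra_simps)
  also have "\<dots> \<ge> 0"
    unfolding det_rot using assms(1,2) z \<open>0 \<le> a\<close> \<open>0 \<le> c'\<close> by simp
  finally have "0 \<le> sym2_lmin n1 n2 n3"
    unfolding sym2_lmin_nonneg_iff using assms(1,2) \<open>0 \<le> a\<close> \<open>0 \<le> c'\<close> z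
    by (simp add: n1_def n3_def)
  moreover have "mat_pmean \<alpha> q (rmat2 1 0 0 e) (rot_sym2 c s 1 e) = mat_rpow (rmat2 n1 n2 n2 n3) (1/q)"
    unfolding mat_pmean_def mat_rpow_diag2 mat_rpow_rot_sym2[OF assms(5)] powr_one_eq_one
      z_def[symmetric] rot smult_rmat2 rmat2_add
    by (simp add: n1_def n2_def n3_def)
  ultimately show ?thesis
    using eig_1_mat_rpow_sym2 assms(3)
    by (simp add: pmean_lmax_def z_def n1_def n2_def n3_def a_def b_def c'_def)
qed

lemma pmean_lmax_0:
  assumes "c*c + s*s = 1"
  shows "pmean_lmax \<alpha> c s 0 = 1/2 + sqrt (1/4 - \<alpha>*(1 - \<alpha>)*(s*s))"
proof -
  have "\<alpha>*(c*c) + \<alpha>*(s*s) = \<alpha>" using assms by (metis distrib_left mult_1_right)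
  thus ?thesis unfolding pmean_lmax_def sym2_lmax_trace_det by (simp add: algebra_simps)
qed

lemma tendsto_pmean_lmax:
  assumes "0 < r"
  shows "((\<lambda>d. pmean_lmax \<alpha> c s (d powr r)) \<longlongrightarrow> pmean_lmax \<alpha> c s 0) (at_right 0)"
proof -
  have "((\<lambda>d::real. d powr r) \<longlongrightarrow> 0 powr r) (at_right 0)"
    using assms eventually_at_right_less[of "0::real"]
    by (intro tendsto_powr2) (auto elim: eventually_mono)
  thus ?thesis unfolding pmean_lmax_def sym2_lmax_def
    by (intro tendsto_intros) simp_all
qed

lemma tendsto_sg_lower:
  assumes "0 < \<alpha>" "c \<noteq> 0" "c*c + s*s = 1"
  shows "(sg_lower \<alpha> c s \<longlongrightarrow> (c*c) powr \<alpha>) (at_right 0)"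
proof -
  define a b c' where "a d = c*c + s*s*d" and "b d = sqrt d * (c*s*(1 - d))"
    and "c' d = d * (s*s + c*c*d)" for d
  have entries: "(a \<longlongrightarrow> c*c) (at_right 0)" "(b \<longlongrightarrow> 0) (at_right 0)" "(c' \<longlongrightarrow> 0) (at_right 0)"
    unfolding a_def b_def c'_def by (auto intro!: tendsto_eq_intros)
  have "((\<lambda>d. sym2_lmax (a d) (b d) (c' d)) \<longlongrightarrow> sym2_lmax (c*c) 0 0) (at_right 0)"
    unfolding sym2_lmax_def by (intro tendsto_intros entries) simp_all
  moreover have "((\<lambda>d. sym2_lmin (a d) (b d) (c' d)) \<longlongrightarrow> sym2_lmin (c*c) 0 0) (at_right 0)"
    unfolding sym2_lmin_def by (intro tendsto_intros entries) simp_all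
  moreover have "sym2_lmax (c*c) 0 0 = c*c" "sym2_lmin (c*c) 0 0 = 0"
    by (simp_all add: sym2_lmax_def sym2_lmin_def)
  ultimately have l: "((\<lambda>d. sym2_lmax (a d) (b d) (c' d)) \<longlongrightarrow> c*c) (at_right 0)"
    and m: "((\<lambda>d. sym2_lmin (a d) (b d) (c' d)) \<longlongrightarrow> 0) (at_right 0)"
    by simp_all
  have lmin_nonneg: "\<forall>\<^sub>F d in at_right 0. 0 \<le> sym2_lmin (a d) (b d) (c' d)"
    using eventually_at_right_less[of "0::real"]
    by eventually_elim (simp add: a_def b_def c'_def sym2_lmin_scaled_rot_nonneg[OF _ assms(3)])
  hence lmax_nonneg: "\<forall>\<^sub>F d in at_right 0. 0 \<le> sym2_lmax (a d) (b d) (c' d)"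
    by eventually_elim (meson order_trans sym2_lmin_le_lmax)
  have "(sg_lower \<alpha> c s \<longlongrightarrow> ((c*c) * 0 powr \<alpha> - 0 * (c*c) powr \<alpha>) / (c*c - 0)
        + ((c*c) powr \<alpha> - 0 powr \<alpha>) / (c*c - 0) * (c*c)) (at_right 0)"
    unfolding sg_lower_def[abs_def] Let_def secant_intercept_def secant_slope_def
      a_def[symmetric] b_def[symmetric] c'_def[symmetric]
    using assms by (intro tendsto_intros l m entries tendsto_powr2 lmin_nonneg lmax_nonneg) auto
  thus ?thesis using assms(2) by simp
qed

lemma exists_root_below_powr:
  fixes \<beta> \<rho> :: real
  assumes "0 < \<rho>" "\<rho> < \<beta>" "\<beta> \<le> 1/4"
  obtains u where "0 < u" "u < 1" "1/2 + sqrt (1/4 - \<beta>*u) < (1 - u) powr \<rho>"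
proof -
  define u where "u = (1 - \<rho>/\<beta>) / 2"
  have \<beta>: "0 < \<beta>" using assms by simp
  have u: "0 < u" "u < 1/2" using assms \<beta> by (simp_all add: u_def field_simps)
  have "\<beta>*u \<le> 1/8" using mult_mono[OF assms(3) less_imp_le[OF u(2)]] \<beta> u(1) by simp
  moreover have "(1/2 - \<beta>*u)\<^sup>2 = 1/4 - \<beta>*u + (\<beta>*u)\<^sup>2"
    by (simp add: power2_eq_square algebra_simps)
  ultimately have "sqrt (1/4 - \<beta>*u) \<le> sqrt ((1/2 - \<beta>*u)\<^sup>2)"
    by (intro real_sqrt_le_mono) simp
  also have "\<dots> = 1/2 - \<beta>*u" using \<open>\<beta>*u \<le> 1/8\<close> by simp
  finally have upper: "1/2 + sqrt (1/4 - \<beta>*u) \<le> 1 - \<beta>*u" by simp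
  have "- ln (1 - u) \<le> 1 / (1 - u) - 1"
    using ln_le_minus_one[of "1 / (1 - u)"] u by (simp add: ln_div)
  hence "- (u / (1 - u)) \<le> ln (1 - u)" using u by (simp add: field_simps)
  hence "1 - \<rho> * u / (1 - u) \<le> 1 + \<rho> * ln (1 - u)"
    using mult_left_mono[of _ _ \<rho>] assms(1) by fastforce
  also have "\<dots> \<le> (1 - u) powr \<rho>"
    using u exp_ge_add_one_self[of "\<rho> * ln (1 - u)"] by (simp add: powr_def)
  finally have lower: "1 - \<rho> * u / (1 - u) \<le> (1 - u) powr \<rho>" .
  have "\<rho> = \<beta> * (1 - 2*u)" using \<beta> by (simp add: u_def field_simps)
  hence "\<rho> < \<beta> * (1 - u)" using \<beta> u by (simp add: mult_strict_left_mono)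
  hence "\<rho> * u < \<beta> * (1 - u) * u" using u(1) by (rule mult_strict_right_mono)
  hence "\<rho> * u / (1 - u) < \<beta> * u" using u by (simp add: field_simps)
  hence "1/2 + sqrt (1/4 - \<beta>*u) < (1 - u) powr \<rho>" using upper lower by linarith
  thus ?thesis using that u by simp
qed

lemma exists_rotation_with_limit_gap:
  assumes "0 < \<alpha>" "\<alpha> < 1" "0 < p" "0 < q" "q / p < 1 - \<alpha>"
  obtains c s where "c*c + s*s = 1" "c \<noteq> 0" "s \<noteq> 0" "0 < pmean_lmax \<alpha> c s 0"
    "pmean_lmax \<alpha> c s 0 powr (1/q) < ((c*c) powr \<alpha>) powr (1/p)"
proof -
  define \<rho> where "\<rho> = \<alpha> * (q / p)"
  have "0 < \<rho>" "\<rho> < \<alpha> * (1 - \<alpha>)"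
    using assms mult_strict_left_mono[OF assms(5) assms(1)] by (simp_all add: \<rho>_def)
  moreover have "\<alpha> * (1 - \<alpha>) \<le> 1/4"
    using zero_le_power2[of "\<alpha> - 1/2"] by (simp add: power2_eq_square algebra_simps)
  ultimately
  obtain u where u: "0 < u" "u < 1" and root: "1/2 + sqrt (1/4 - \<alpha> * (1 - \<alpha>) * u) < (1 - u) powr \<rho>"
    by (rule exists_root_below_powr)
  define c s where "c = sqrt (1 - u)" and "s = sqrt u"
  have cs: "c*c = 1 - u" "s*s = u" "c*c + s*s = 1" "c \<noteq> 0" "s \<noteq> 0"
    using u by (simp_all add: c_def s_def)
  define L where "L = pmean_lmax \<alpha> c s 0"
  have L: "L = 1/2 + sqrt (1/4 - \<alpha> * (1 - \<alpha>) * u)"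
    using pmean_lmax_0[OF cs(3)] by (simp add: L_def cs(2) mult.assoc)
  have "(1 - \<alpha>) + \<alpha>*(c*c + s*s*0) \<le> L"
    unfolding L_def pmean_lmax_def by (rule sym2_lmax_ge_diag)
  moreover have "0 < (1 - \<alpha>) + \<alpha>*(c*c + s*s*0)"
    using assms(1,2) by (simp add: add_pos_nonneg)
  ultimately have "0 < L" by linarith
  have "L powr (1/q) < ((1 - u) powr \<rho>) powr (1/q)"
    using root L \<open>0 < L\<close> assms(4) by (intro powr_less_mono2) auto
  also have "\<dots> = ((c*c) powr \<alpha>) powr (1/p)"
    using assms(3,4) by (simp add: cs(1) powr_powr \<rho>_def)
  finally show ?thesis using that cs(3-5) \<open>0 < L\<close> by (simp add: L_def)
qed

lemma exists_rotation_with_gap: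
  assumes "0 < \<alpha>" "\<alpha> < 1" "0 < p" "0 < q" "q / p < 1 - \<alpha>"
  obtains c s d where "c*c + s*s = 1" "c \<noteq> 0" "s \<noteq> 0" "0 < d" "d < 1"
    "pmean_lmax \<alpha> c s (d powr (q/p)) powr (1/q) < sg_lower \<alpha> c s d powr (1/p)"
proof -
  obtain c s where cs: "c*c + s*s = 1" "c \<noteq> 0" "s \<noteq> 0" and L: "0 < pmean_lmax \<alpha> c s 0"
    and gap: "pmean_lmax \<alpha> c s 0 powr (1/q) < ((c*c) powr \<alpha>) powr (1/p)"
    using exists_rotation_with_limit_gap[OF assms] .
  have "((\<lambda>d. sg_lower \<alpha> c s d powr (1/p)) \<longlongrightarrow> ((c*c) powr \<alpha>) powr (1/p)) (at_right 0)"
    using cs by (intro tendsto_powr tendsto_sg_lower assms) auto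
  moreover have "((\<lambda>d. pmean_lmax \<alpha> c s (d powr (q/p)) powr (1/q)) \<longlongrightarrow> pmean_lmax \<alpha> c s 0 powr (1/q))
      (at_right 0)"
    using assms L by (intro tendsto_powr tendsto_pmean_lmax) auto
  ultimately have "((\<lambda>d. sg_lower \<alpha> c s d powr (1/p) - pmean_lmax \<alpha> c s (d powr (q/p)) powr (1/q))
      \<longlongrightarrow> ((c*c) powr \<alpha>) powr (1/p) - pmean_lmax \<alpha> c s 0 powr (1/q)) (at_right 0)"
    by (rule tendsto_diff)
  hence "\<forall>\<^sub>F d in at_right 0. pmean_lmax \<alpha> c s (d powr (q/p)) powr (1/q) < sg_lower \<alpha> c s d powr (1/p)"
    using gap by (auto dest: order_tendstoD(1)[of _ _ _ 0])
  moreover have "\<forall>\<^sub>F d in at_right 0. 0 < d \<and> d < (1::real)"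
    by (rule eventually_at_rightI[of 0 1]) auto
  ultimately show ?thesis
    using that cs eventually_happens'[OF trivial_limit_at_right_real, of _ 0] eventually_conj by blast
qed

lemma SG_tilde_exceeds_mat_pmean:
  assumes "0 < \<alpha>" "\<alpha> < 1" "0 < p" "0 < q" "q / p < 1 - \<alpha>"
  obtains A B where "A \<in> carrier_mat 2 2" "B \<in> carrier_mat 2 2" "pos_def_mat A" "pos_def_mat B"
    "eig 1 (mat_pmean \<alpha> q A B) < eig 1 (SG_tilde \<alpha> p A B)" "dim_row (SG_tilde \<alpha> p A B) = 2"
proof -
  obtain c s d where cs: "c*c + s*s = 1" "c \<noteq> 0" "s \<noteq> 0" and d: "0 < d" "d < 1"
    and below: "pmean_lmax \<alpha> c s (d powr (q/p)) powr (1/q) < sg_lower \<alpha> c s d powr (1/p)"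
    using exists_rotation_with_gap[OF assms] .
  define A B where "A = rmat2 1 0 0 (d powr (1/p))" and "B = rot_sym2 c s 1 (d powr (1/p))"
  have "eig 1 (mat_pmean \<alpha> q A B) = pmean_lmax \<alpha> c s (d powr (q/p)) powr (1/q)"
    unfolding A_def B_def using assms d cs
    by (subst eig_1_mat_pmean_rot_sym2) (auto simp: powr_powr)
  also have "\<dots> < eig 1 (SG_tilde \<alpha> p A B)"
    using below SG_tilde_rot_sym2_lower_bound(1)[of p d c s \<alpha>] assms d cs
    by (simp add: A_def B_def)
  finally have "eig 1 (mat_pmean \<alpha> q A B) < eig 1 (SG_tilde \<alpha> p A B)" .
  moreover have "pos_def_mat A" "pos_def_mat B"
    using pos_def_rot_sym2[of 1 0 1 "d powr (1/p)"] pos_def_rot_sym2[OF cs(1), of 1 "d powr (1/p)"] d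
    by (simp_all add: A_def B_def)
  moreover have "dim_row (SG_tilde \<alpha> p A B) = 2"
    using SG_tilde_rot_sym2_lower_bound(2)[of p d c s \<alpha>] assms d cs by (simp add: A_def B_def)
  ultimately show ?thesis by (intro that[of A B]) (simp_all add: A_def B_def rot_sym2_def)
qed

lemma weak_maj_eig_1: "weak_maj X Y \<Longrightarrow> 1 \<le> dim_row X \<Longrightarrow> eig 1 X \<le> eig 1 Y"
  unfolding weak_maj_def by (drule bspec[of _ _ 1]) auto

theorem theorem4p35:
  fixes \<alpha> p q :: real
  assumes "0 < \<alpha>" and "\<alpha> < 1" and "0 < p" and "0 < q"
  shows "((\<forall>A B. A \<in> carrier_mat 2 2 \<longrightarrow> B \<in> carrier_mat 2 2 \<longrightarrow> pos_def_mat A \<longrightarrow> pos_def_mat B \<longrightarrow>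
            eig 1 (SG_tilde \<alpha> p A B) \<le> eig 1 (mat_pmean \<alpha> q A B)) \<longrightarrow> q / p \<ge> 1 - \<alpha>) \<and>
         ((\<forall>A B. A \<in> carrier_mat 2 2 \<longrightarrow> B \<in> carrier_mat 2 2 \<longrightarrow> pos_def_mat A \<longrightarrow> pos_def_mat B \<longrightarrow>
            weak_maj (SG_tilde \<alpha> p A B) (mat_pmean \<alpha> q A B)) \<longrightarrow> q / p \<ge> 1 - \<alpha>)"
proof (cases "1 - \<alpha> \<le> q / p")
  case False
  then obtain A B where "A \<in> carrier_mat 2 2" "B \<in> carrier_mat 2 2" "pos_def_mat A" "pos_def_mat B"
    and gap: "eig 1 (mat_pmean \<alpha> q A B) < eig 1 (SG_tilde \<alpha> p A B)"
    and dim: "dim_row (SG_tilde \<alpha> p A B) = 2"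
    using SG_tilde_exceeds_mat_pmean[OF assms] by (metis not_le)
  moreover from gap have "\<not> eig 1 (SG_tilde \<alpha> p A B) \<le> eig 1 (mat_pmean \<alpha> q A B)"
    by simp
  moreover from this dim have "\<not> weak_maj (SG_tilde \<alpha> p A B) (mat_pmean \<alpha> q A B)"
    using weak_maj_eig_1 by force
  ultimately show ?thesis by blast
qed simp

end
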